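(* Let $P$ be a program of the imperative language described in the context, and suppose $\vdash P : M$ is derivable in the deterministic calculus, with $M$ an $n\times n$ matrix with coefficients in $\{0,1,2\}^p\to\mathrm{mwp}^{\infty}$. If there exists $\vec a\in\{0,1,2\}^p$ such that no coefficient of $M[\vec a]$ equals $\infty$, then every value computed by $P$ is bounded by a polynomial in the inputs (the initial values of the variables of $P$).
   Context: Language. Variables range over $X_1,\dots,X_n$ (a fixed finite set; these are the program's inputs), and $b$ ranges over boolean expressions (unspecified). Expressions: $e ::= X \mid X - Y \mid X + Y \mid X * Y$. Commands: $C ::= X = e \mid \texttt{if } b \texttt{ then } C \texttt{ else } C \mid \texttt{while } b \texttt{ do } \{C\} \mid \texttt{loop } X \{C\} \mid C;C$, where $\texttt{loop } X\{C\}$ executes $C$ $X$ times. A program is a sequential composition of commands. Semi-rings. $\mathrm{mwp}^\infty$ has carrier $\{0,m,w,p,\infty\}$ with $0<m<w<p<\infty$, addition $\max$, and $\alpha\times\beta=0$ if $\alpha,\beta\neq\infty$ and one of them is $0$, $\max(\alpha,\beta)$ otherwise. $\{0,1,2\}^p\to\mathrm{mwp}^\infty$ is the semi-ring of functions with pointwise operations (constants identified with constant functions). Matrices are $n\times n$ with componentwise $\oplus$, usual product $\otimes$, unit $\mathbf{1}$ ($m$ on the diagonal, $0$ elsewhere), closure $M^*=\mathbf{1}\oplus M\oplus M^2\oplus\cdots$. $M[\vec a]$ is $M$ with every coefficient evaluated at $\vec a$. $\delta(i,k)(\vec a)=m$ if $a_k=i$, $0$ otherwise. $\{^{\alpha}_i\}$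 is the $n$-vector with $\alpha$ in row $i$ and $0$ elsewhere, $\{^\alpha_i,^\beta_j\}=\{^\alpha_i\}\oplus\{^\beta_j\}$, $\mathbf{1}\xleftarrow{j}V$ is the unit matrix with column $j$ replaced by $V$, $\{^\alpha_i\to j\}$ is the matrix with $\alpha$ at $(i,j)$ and $0$ elsewhere. Deterministic calculus $\vdash$: each application of rule E$^A$ receives its own choice index $k\in\{1,\dots,p\}$ ($p$ = number of applications). (E$^A$) for $\star\in\{+,-\}$: $\vdash X_i\star X_j:\delta(0,k)\{^m_i,^p_j\}\oplus\delta(1,k)\{^p_i,^m_j\}\oplus\delta(2,k)\{^w_i,^w_j\}$; (E$^M$) $\vdash X_i*X_j:\{^w_i,^w_j\}$; (E$^S$) $\vdash X_i:\{^m_i\}$; (A) from $\vdash e:V$ infer $\vdash X_j=e:\mathbf{1}\xleftarrow{j}V$; (C) from $\vdash C_1:M_1,\ \vdash C_2:M_2$ infer $\vdash C_1;C_2:M_1\otimes M_2$; (I) same premises, $\vdash\texttt{if } b\texttt{ then } C_1\texttt{ else } C_2:M_1\oplus M_2$; (L$^\infty$) from $\vdash C:M$ infer $\vdash\texttt{loop } X_l\{C\}:M^*\oplus\{^\infty_j\to j\mid M^*_{jj}\neq m\}\oplus\{^p_l\to j\mid\exists i,\ M^*_{ij}=p\}$; (W$^\infty$) from $\vdash C:M$ infer $\vdash\texttt{while } b\texttt{ do }\{C\}:M^*\oplus\{^\infty_j\to j\mid M^*_{jj}\neq m\}\oplus\{^\infty_i\to j\mid M^*_{ij}=p\}$ (conditions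 understood pointwise for each choice assignment). *)

theory Defs
  imports Main
begin

datatype mwp = Zm | Mm | Wm | Pm | Infm

fun mwp_rank :: "mwp \<Rightarrow> nat" where
  "mwp_rank Zm = 0" | "mwp_rank Mm = 1" | "mwp_rank Wm = 2"
| "mwp_rank Pm = 3" | "mwp_rank Infm = 4"

lemma mwp_rank_inj: "mwp_rank x = mwp_rank y \<Longrightarrow> x = y"
  by (cases x; cases y; simp)

instantiation mwp :: linorder
begin
definition less_eq_mwp :: "mwp \<Rightarrow> mwp \<Rightarrow> bool" where
  "less_eq_mwp x y = (mwp_rank x \<le> mwp_rank y)"
definition less_mwp :: "mwp \<Rightarrow> mwp \<Rightarrow> bool" where
  "less_mwp x y = (mwp_rank x < mwp_rank y)"
instance
  by standard (auto simp: less_eq_mwp_def less_mwp_def intro: mwp_rank_inj)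
end

lemma UNIV_mwp: "(UNIV :: mwp set) = {Zm, Mm, Wm, Pm, Infm}"
  using mwp.exhaust by auto

instance mwp :: finite
  by standard (simp add: UNIV_mwp)

definition madd :: "mwp \<Rightarrow> mwp \<Rightarrow> mwp" where
  "madd x y = max x y"

definition mmul :: "mwp \<Rightarrow> mwp \<Rightarrow> mwp" where
  "mmul x y = (if x \<noteq> Infm \<and> y \<noteq> Infm \<and> (x = Zm \<or> y = Zm) then Zm else max x y)"

text \<open>A choice vector is a function from indices to {0,1,2} (only indices 1..p matter).
  Vectors and matrices are indexed by variables 0..n-1.\<close>

type_synonym choice = "nat \<Rightarrow> nat"
type_synonym coef = "choice \<Rightarrow> mwp"
type_synonym vec = "nat \<Rightarrow> coef"
type_synonym mat = "nat \<Rightarrow> nat \<Rightarrow> coef"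

definition msum :: "mwp list \<Rightarrow> mwp" where
  "msum xs = foldr madd xs Zm"

definition unit_mat :: mat where
  "unit_mat i j a = (if i = j then Mm else Zm)"

definition mat_add :: "mat \<Rightarrow> mat \<Rightarrow> mat" where
  "mat_add A B i j a = madd (A i j a) (B i j a)"

definition mat_mul :: "nat \<Rightarrow> mat \<Rightarrow> mat \<Rightarrow> mat" where
  "mat_mul n A B i j a = msum (map (\<lambda>k. mmul (A i k a) (B k j a)) [0..<n])"

fun mat_pow :: "nat \<Rightarrow> mat \<Rightarrow> nat \<Rightarrow> mat" where
  "mat_pow n A 0 = unit_mat"
| "mat_pow n A (Suc k) = mat_mul n (mat_pow n A k) A"

text \<open>Closure M* = 1 + M + M^2 + ...; with addition max on the finite carrier this
  is the (attained) maximum over all powers, computed pointwise.\<close>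
definition mat_star :: "nat \<Rightarrow> mat \<Rightarrow> mat" where
  "mat_star n A i j a = Max (range (\<lambda>k. mat_pow n A k i j a))"

definition delta :: "nat \<Rightarrow> nat \<Rightarrow> coef" where
  "delta i k a = (if a k = i then Mm else Zm)"

definition vsingle :: "nat \<Rightarrow> mwp \<Rightarrow> vec" where
  "vsingle i \<alpha> r a = (if r = i then \<alpha> else Zm)"

definition vpair :: "nat \<Rightarrow> mwp \<Rightarrow> nat \<Rightarrow> mwp \<Rightarrow> vec" where
  "vpair i \<alpha> j \<beta> r a = madd (vsingle i \<alpha> r a) (vsingle j \<beta> r a)"

definition vec_add :: "vec \<Rightarrow> vec \<Rightarrow> vec" where
  "vec_add V W r a = madd (V r a) (W r a)"

definition scal_vec :: "coef \<Rightarrow> vec \<Rightarrow> vec" where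
  "scal_vec c V r a = mmul (c a) (V r a)"

definition col_replace :: "nat \<Rightarrow> vec \<Rightarrow> mat" where
  "col_replace j V r c a = (if c = j then V r a else unit_mat r c a)"

text \<open>Results of the rules (L-infinity) and (W-infinity), pointwise in the choice vector.\<close>
definition loop_mat :: "nat \<Rightarrow> nat \<Rightarrow> mat \<Rightarrow> mat" where
  "loop_mat n l A i j a =
     (let S = mat_star n A in
      madd (S i j a)
        (madd (if i = j \<and> S j j a \<noteq> Mm then Infm else Zm)
              (if i = l \<and> (\<exists>i'<n. S i' j a = Pm) then Pm else Zm)))"

definition while_mat :: "nat \<Rightarrow> mat \<Rightarrow> mat" where
  "while_mat n A i j a =
     (let S = mat_star n A in
      madd (S i j a)
        (madd (if i = j \<and> S j j a \<noteq> Mm then Infm else Zm)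
              (if S i j a = Pm then Infm else Zm)))"

text \<open>Variables X_1..X_n are represented by indices 0..n-1; values are natural numbers
  (subtraction is truncated). Boolean expressions are left unspecified: any predicate on stores.\<close>

type_synonym store = "nat \<Rightarrow> nat"
type_synonym bexp = "store \<Rightarrow> bool"

datatype aexp = V nat | Sub nat nat | Plus nat nat | Times nat nat

datatype cmd =
    Assign nat aexp
  | If bexp cmd cmd
  | While bexp cmd
  | Loop nat cmd
  | Seq cmd cmd

fun aval :: "aexp \<Rightarrow> store \<Rightarrow> nat" where
  "aval (V i) s = s i"
| "aval (Sub i j) s = s i - s j"
| "aval (Plus i j) s = s i + s j"
| "aval (Times i j) s = s i * s j"

inductive exec :: "cmd \<Rightarrow> store \<Rightarrow> store \<Rightarrow> bool"
  and execn :: "cmd \<Rightarrow> nat \<Rightarrow> store \<Rightarrow> store \<Rightarrow> bool" where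
  Assign: "exec (Assign x e) s (s(x := aval e s))"
| IfT: "b s \<Longrightarrow> exec C1 s t \<Longrightarrow> exec (If b C1 C2) s t"
| IfF: "\<not> b s \<Longrightarrow> exec C2 s t \<Longrightarrow> exec (If b C1 C2) s t"
| WhileF: "\<not> b s \<Longrightarrow> exec (While b C) s s"
| WhileT: "b s \<Longrightarrow> exec C s t \<Longrightarrow> exec (While b C) t u \<Longrightarrow> exec (While b C) s u"
| Loop: "execn C (s x) s t \<Longrightarrow> exec (Loop x C) s t"
| Seq: "exec C1 s t \<Longrightarrow> exec C2 t u \<Longrightarrow> exec (Seq C1 C2) s u"
| N0: "execn C 0 s s"
| NSuc: "exec C s t \<Longrightarrow> execn C k t u \<Longrightarrow> execn C (Suc k) s u"

text \<open>etyp n e K V : |- e : V, where K is the set of choice indices used (one fresh index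
  per application of E^A).\<close>
inductive etyp :: "nat \<Rightarrow> aexp \<Rightarrow> nat set \<Rightarrow> vec \<Rightarrow> bool" where
  ES: "i < n \<Longrightarrow> etyp n (V i) {} (vsingle i Mm)"
| EM: "i < n \<Longrightarrow> j < n \<Longrightarrow> etyp n (Times i j) {} (vpair i Wm j Wm)"
| EA_sub: "i < n \<Longrightarrow> j < n \<Longrightarrow> etyp n (Sub i j) {k}
     (vec_add (scal_vec (delta 0 k) (vpair i Mm j Pm))
       (vec_add (scal_vec (delta 1 k) (vpair i Pm j Mm))
                (scal_vec (delta 2 k) (vpair i Wm j Wm))))"
| EA_plus: "i < n \<Longrightarrow> j < n \<Longrightarrow> etyp n (Plus i j) {k}
     (vec_add (scal_vec (delta 0 k) (vpair i Mm j Pm))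
       (vec_add (scal_vec (delta 1 k) (vpair i Pm j Mm))
                (scal_vec (delta 2 k) (vpair i Wm j Wm))))"

text \<open>ctyp n C K M : |- C : M, with K the set of (pairwise distinct) choice indices used.\<close>
inductive ctyp :: "nat \<Rightarrow> cmd \<Rightarrow> nat set \<Rightarrow> mat \<Rightarrow> bool" where
  A: "j < n \<Longrightarrow> etyp n e K W \<Longrightarrow> ctyp n (Assign j e) K (col_replace j W)"
| C: "ctyp n C1 K1 M1 \<Longrightarrow> ctyp n C2 K2 M2 \<Longrightarrow> K1 \<inter> K2 = {} \<Longrightarrow>
      ctyp n (Seq C1 C2) (K1 \<union> K2) (mat_mul n M1 M2)"
| I: "ctyp n C1 K1 M1 \<Longrightarrow> ctyp n C2 K2 M2 \<Longrightarrow> K1 \<inter> K2 = {} \<Longrightarrow>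
      ctyp n (If b C1 C2) (K1 \<union> K2) (mat_add M1 M2)"
| L: "l < n \<Longrightarrow> ctyp n C K M \<Longrightarrow> ctyp n (Loop l C) K (loop_mat n l M)"
| W: "ctyp n C K M \<Longrightarrow> ctyp n (While b C) K (while_mat n M)"

inductive_set polys :: "nat \<Rightarrow> (store \<Rightarrow> nat) set" for n where
  const: "(\<lambda>s. c) \<in> polys n"
| var: "i < n \<Longrightarrow> (\<lambda>s. s i) \<in> polys n"
| add: "q1 \<in> polys n \<Longrightarrow> q2 \<in> polys n \<Longrightarrow> (\<lambda>s. q1 s + q2 s) \<in> polys n"
| mul: "q1 \<in> polys n \<Longrightarrow> q2 \<in> polys n \<Longrightarrow> (\<lambda>s. q1 s * q2 s) \<in> polys n"

end

theory Submission
  imports Defs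
begin

text \<open>
  Fix a choice vector \<open>a\<close> for which \<open>M[a]\<close> has no \<open>\<infinity>\<close>. By induction on the derivation, every
  command typed with a matrix \<open>L\<close> admits a degree \<open>d\<close> such that the final value of each
  \<open>X\<^sub>j\<close> is at most \<open>max(x, q(y)) + q(z)\<close>, where \<open>x\<close> is the largest input with an \<open>m\<close> in
  column \<open>j\<close> of \<open>L\<close>, \<open>y\<close> sums the inputs with \<open>w\<close> or \<open>p\<close>, \<open>z\<close> sums those with \<open>p\<close>, and
  \<open>q(x) = x (2 + x)\<^sup>d\<close>. Composition multiplies the matrices, and the bound follows by substituting
  one bound into the other. For a loop, the closure \<open>S = M[a]\<^sup>*\<close> is transitive with \<open>m\<close> on the
  diagonal, so a \<open>w\<close> or \<open>p\<close> entry \<open>S\<^sub>i\<^sub>j\<close> strictly shrinks the set of dependencies; induction on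
  its size and then on the number \<open>k\<close> of iterations bounds the values after \<open>k\<close> iterations
  with \<open>z + k\<close> in place of \<open>z\<close> in p-dependent columns. Rule (L\<open>\<^sup>\<infinity>\<close>) records the counter as a
  \<open>p\<close>-dependency, and under (W\<open>\<^sup>\<infinity>\<close>) no column is p-dependent. Finally each bound is below the
  polynomial \<open>2 q(X\<^sub>1 + \<dots> + X\<^sub>n)\<close>.
\<close>

section \<open>Growth functions\<close>

definition growth :: "nat \<Rightarrow> nat \<Rightarrow> nat" where
  "growth d x = x * (2 + x) ^ d"

lemma le_growth: "x \<le> growth d x"
  unfolding growth_def by simp

lemma growth_0 [simp]: "growth d 0 = 0"
  unfolding growth_def by simp

lemma growth_mono: "x \<le> y \<Longrightarrow> d \<le> e \<Longrightarrow> growth d x \<le> growth e y"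
proof -
  assume le: "x \<le> y" "d \<le> e"
  have "(2 + x) ^ d \<le> (2 + y) ^ d" using le by (simp add: power_mono)
  also have "\<dots> \<le> (2 + y) ^ e" using le by (simp add: power_increasing)
  finally show ?thesis unfolding growth_def using le by (simp add: mult_le_mono)
qed

lemma growth_max_le: "growth d (max x y) \<le> growth d x + growth d y"
  by (cases "x \<le> y") (auto simp: max_def)

lemma double_le_growth_1: "x + x \<le> growth 1 x"
  unfolding growth_def by simp

lemma growth_add_le: "growth a x + growth b x \<le> growth (max a b + 1) x"
proof -
  have "growth a x + growth b x \<le> 2 * growth (max a b) x"
    using growth_mono[of x x a "max a b"] growth_mono[of x x b "max a b"] by simp
  also have "\<dots> = x * (2 * (2 + x) ^ max a b)" unfolding growth_def by simp
  also have "\<dots> \<le> x * ((2 + x) * (2 + x) ^ max a b)"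
    by (intro mult_le_mono) auto
  finally show ?thesis unfolding growth_def by simp
qed

lemma mult_growth_le: "c * growth a x \<le> growth (a + c) x"
proof -
  have "c < 2 ^ c" by (rule less_exp)
  also have "(2::nat) ^ c \<le> (2 + x) ^ c" by (simp add: power_mono)
  finally have "c * (x * (2 + x) ^ a) \<le> (2 + x) ^ c * (x * (2 + x) ^ a)" by simp
  then show ?thesis unfolding growth_def by (simp add: power_add algebra_simps)
qed

lemma growth_growth_le: "growth a (growth b x) \<le> growth (b + a * (b + 1)) x"
proof -
  have base: "2 + growth b x \<le> (2 + x) ^ (b + 1)"
  proof -
    define y where "y = (2 + x) ^ b"
    have "1 \<le> y" unfolding y_def by simp
    then have "2 + x * y \<le> (2 + x) * y" by (simp add: algebra_simps)
    then show ?thesis unfolding growth_def y_def by simp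
  qed
  have "growth a (growth b x) \<le> growth b x * ((2 + x) ^ (b + 1)) ^ a"
    unfolding growth_def[of a] by (intro mult_le_mono power_mono base) auto
  also have "\<dots> = growth (b + a * (b + 1)) x"
  proof -
    have "((2 + x) ^ (b + 1)) ^ a = (2 + x) ^ (a * (b + 1))"
      by (simp only: power_mult[symmetric] mult.commute)
    then show ?thesis unfolding growth_def by (simp add: power_add mult.assoc)
  qed
  finally show ?thesis .
qed

lemma growth_mult_growth_le:
  "growth d2 (n * (2 * growth d1 x)) \<le> growth (d1 + 2 * n + d2 * (d1 + 2 * n + 1)) x"
proof -
  have "n * (2 * growth d1 x) \<le> growth (d1 + 2 * n) x"
    using mult_growth_le[of "2 * n" d1 x] by (simp add: mult.assoc)
  then have "growth d2 (n * (2 * growth d1 x)) \<le> growth d2 (growth (d1 + 2 * n) x)"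
    using growth_mono by blast
  also have "\<dots> \<le> growth (d1 + 2 * n + d2 * (d1 + 2 * n + 1)) x" by (rule growth_growth_le)
  finally show ?thesis .
qed

lemma growth_plus_double_growth_le: "growth (d + 2) x + 2 * growth d x \<le> growth (d + 2) (x + 1)"
proof -
  have "2 * x * (2 + x) ^ d \<le> (3 + x) * (3 + x) * (3 + x) ^ d"
    by (intro mult_le_mono power_mono) (auto simp: algebra_simps)
  also have "\<dots> = (3 + x) ^ (d + 2)" by (simp add: power_add power2_eq_square)
  finally have "2 * growth d x \<le> (3 + x) ^ (d + 2)"
    unfolding growth_def by (simp add: mult.assoc)
  moreover have "growth (d + 2) x + (3 + x) ^ (d + 2) \<le> growth (d + 2) (x + 1)"
  proof -
    have "x * (2 + x) ^ (d + 2) \<le> x * (3 + x) ^ (d + 2)" by (intro mult_le_mono power_mono) auto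
    moreover have "growth (d + 2) (x + 1) = (x + 1) * (3 + x) ^ (d + 2)"
    proof -
      have "2 + (x + 1) = 3 + x" by simp
      then show ?thesis unfolding growth_def by (simp only:)
    qed
    ultimately show ?thesis unfolding growth_def by (simp only: distrib_right mult_1_left)
  qed
  ultimately show ?thesis by linarith
qed

section \<open>Arithmetic in mwp\<close>

lemma mwp_le_simps [simp]:
  "Zm \<le> x" "x \<le> Infm" "(x \<le> Zm) = (x = Zm)" "(Infm \<le> x) = (x = Infm)"
  "Mm \<le> Wm" "Mm \<le> Pm" "Wm \<le> Pm" "\<not> Wm \<le> Mm" "\<not> Pm \<le> Mm" "\<not> Pm \<le> Wm"
  by (cases x; simp add: less_eq_mwp_def)+

lemma mwp_ge_Wm: "Wm \<le> x \<Longrightarrow> x \<noteq> Infm \<Longrightarrow> x = Wm \<or> x = Pm"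
  by (cases x) (auto simp: less_eq_mwp_def)

lemma mwp_ge_Pm: "Pm \<le> x \<Longrightarrow> x \<noteq> Infm \<Longrightarrow> x = Pm"
  by (cases x) (auto simp: less_eq_mwp_def)

lemma mmul_assoc: "mmul (mmul x y) z = mmul x (mmul y z)"
  by (cases x; cases y; cases z; simp add: mmul_def max_def)

lemma mmul_mono: "x \<le> x' \<Longrightarrow> y \<le> y' \<Longrightarrow> mmul x y \<le> mmul x' y'"
  by (cases x; cases y; cases x'; cases y'; simp add: mmul_def max_def less_eq_mwp_def)

lemma mmul_Mm [simp]: "mmul Mm x = x" "mmul x Mm = x"
  by (cases x; simp add: mmul_def max_def)+

lemma mmul_Infm [simp]: "mmul Infm x = Infm" "mmul x Infm = Infm"
  by (cases x; simp add: mmul_def max_def)+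

lemma mmul_Zm [simp]: "x \<noteq> Infm \<Longrightarrow> mmul x Zm = Zm" "x \<noteq> Infm \<Longrightarrow> mmul Zm x = Zm"
  by (cases x; simp add: mmul_def max_def)+

lemma mmul_nonzero: "x \<noteq> Zm \<Longrightarrow> y \<noteq> Zm \<Longrightarrow> mmul x y = max x y"
  by (cases x; cases y; simp add: mmul_def max_def)

lemma msum_simps [simp]: "msum [] = Zm" "msum (x # xs) = max x (msum xs)"
  by (simp_all add: msum_def madd_def)

lemma msum_ge: "x \<in> set xs \<Longrightarrow> x \<le> msum xs"
  by (induction xs) (auto simp: le_max_iff_disj)

lemma msum_Zm_or_mem: "msum xs = Zm \<or> msum xs \<in> set xs"
  by (induction xs) (auto simp: max_def)

section \<open>Column bounds\<close>

text \<open>An \<open>emat\<close> is a matrix \<open>M[a]\<close> of the paper: its coefficients evaluated at a choice vector.\<close>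

type_synonym emat = "nat \<Rightarrow> nat \<Rightarrow> mwp"

definition inf_free :: "nat \<Rightarrow> emat \<Rightarrow> bool" where
  "inf_free n L \<longleftrightarrow> (\<forall>i<n. \<forall>j<n. L i j \<noteq> Infm)"

definition p_dependent :: "nat \<Rightarrow> emat \<Rightarrow> nat \<Rightarrow> bool" where
  "p_dependent n L j \<longleftrightarrow> (\<exists>i<n. L i j = Pm)"

definition max_m :: "nat \<Rightarrow> emat \<Rightarrow> nat \<Rightarrow> store \<Rightarrow> nat" where
  "max_m n L j s = Max (insert 0 (s ` {i. i < n \<and> L i j = Mm}))"

definition sum_wp :: "nat \<Rightarrow> emat \<Rightarrow> nat \<Rightarrow> store \<Rightarrow> nat" where
  "sum_wp n L j s = sum s {i. i < n \<and> (L i j = Wm \<or> L i j = Pm)}"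

definition sum_p :: "nat \<Rightarrow> emat \<Rightarrow> nat \<Rightarrow> nat \<Rightarrow> store \<Rightarrow> nat" where
  "sum_p n L k j s = sum s {i. i < n \<and> L i j = Pm} + (if p_dependent n L j then k else 0)"

text \<open>The mwp bound \<open>max(x, q(y)) + q(z)\<close> on the final value of \<open>X\<^sub>j\<close>, where \<open>x\<close>, \<open>y\<close>, \<open>z\<close>
  are its m-, w/p- and p-dependencies and \<open>q = growth d\<close>. The summand \<open>k\<close> counts loop
  iterations; it enters only p-dependent columns, and \<open>k = 0\<close> outside loops.\<close>

definition col_bound :: "nat \<Rightarrow> emat \<Rightarrow> nat \<Rightarrow> nat \<Rightarrow> nat \<Rightarrow> store \<Rightarrow> nat" where
  "col_bound n L d k j s =
     max (max_m n L j s) (growth d (sum_wp n L j s)) + growth d (sum_p n L k j s)"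

definition bounded_by :: "nat \<Rightarrow> cmd \<Rightarrow> emat \<Rightarrow> bool" where
  "bounded_by n c L \<longleftrightarrow> (\<exists>d. \<forall>s t. exec c s t \<longrightarrow> (\<forall>j<n. t j \<le> col_bound n L d 0 j s))"

lemma inf_free_mono:
  "(\<And>i j. i < n \<Longrightarrow> j < n \<Longrightarrow> A i j \<le> B i j) \<Longrightarrow> inf_free n B \<Longrightarrow> inf_free n A"
  unfolding inf_free_def by (metis mwp_le_simps(4))

lemma le_max_m: "i < n \<Longrightarrow> L i j = Mm \<Longrightarrow> s i \<le> max_m n L j s"
  unfolding max_m_def by (rule Max_ge) auto

lemma max_m_le: "(\<And>i. i < n \<Longrightarrow> L i j = Mm \<Longrightarrow> s i \<le> y) \<Longrightarrow> max_m n L j s \<le> y"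
  unfolding max_m_def by (subst Max_le_iff) auto

lemma le_sum_wp: "i < n \<Longrightarrow> L i j = Wm \<or> L i j = Pm \<Longrightarrow> s i \<le> sum_wp n L j s"
  unfolding sum_wp_def by (rule member_le_sum) auto

lemma sum_le_sum_p: "sum s {i. i < n \<and> L i j = Pm} \<le> sum_p n L k j s"
  unfolding sum_p_def by simp

lemma le_sum_p: "i < n \<Longrightarrow> L i j = Pm \<Longrightarrow> s i \<le> sum_p n L k j s"
  using member_le_sum[of i "{i. i < n \<and> L i j = Pm}" s] sum_le_sum_p[of s n L j k] by auto

lemma sum_p_0_le_sum_wp: "sum_p n L 0 j s \<le> sum_wp n L j s"
  unfolding sum_p_def sum_wp_def by (auto intro: sum_mono2)

lemma sum_p_Suc_cases:
  "sum_p n L (Suc k) j s = sum_p n L k j s + 1 \<or> sum_p n L (Suc k) j s = 0 \<and> sum_p n L k j s = 0"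
  unfolding sum_p_def p_dependent_def by auto

lemma sum_le_card_mult:
  fixes f :: "nat \<Rightarrow> nat"
  assumes "A \<subseteq> {..<n}" "\<And>i. i \<in> A \<Longrightarrow> f i \<le> B"
  shows "sum f A \<le> n * B"
proof -
  have "sum f A \<le> card A * B" using sum_bounded_above[of A f B] assms(2) by simp
  also have "\<dots> \<le> n * B" using card_mono[OF _ assms(1)] by simp
  finally show ?thesis .
qed

lemma sum_wp_le_card_mult:
  "(\<And>i. i < n \<Longrightarrow> L i j = Wm \<or> L i j = Pm \<Longrightarrow> s i \<le> B) \<Longrightarrow> sum_wp n L j s \<le> n * B"
  unfolding sum_wp_def by (rule sum_le_card_mult) auto

lemma sum_p_0_le_card_mult:
  "(\<And>i. i < n \<Longrightarrow> L i j = Pm \<Longrightarrow> s i \<le> B) \<Longrightarrow> sum_p n L 0 j s \<le> n * B"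
proof -
  assume "\<And>i. i < n \<Longrightarrow> L i j = Pm \<Longrightarrow> s i \<le> B"
  then have "sum s {i. i < n \<and> L i j = Pm} \<le> n * B" by (intro sum_le_card_mult) auto
  then show ?thesis unfolding sum_p_def by simp
qed

lemma le_max_m_sum_wp:
  assumes "i < n" "L i j \<noteq> Zm" "L i j \<noteq> Infm"
  shows "s i \<le> max (max_m n L j s) (sum_wp n L j s)"
proof (cases "L i j = Mm")
  case True
  then show ?thesis using le_max_m[of i n L j s, OF assms(1) True] by (simp add: le_max_iff_disj)
next
  case False
  then have "L i j = Wm \<or> L i j = Pm" using assms by (cases "L i j") auto
  then show ?thesis using le_sum_wp[OF assms(1)] by (simp add: le_max_iff_disj)
qed

lemma le_col_bound:
  assumes "i < n" "L i j \<noteq> Zm" "L i j \<noteq> Infm"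
  shows "s i \<le> col_bound n L d k j s"
  using le_max_m_sum_wp[of i n L j s, OF assms] le_growth[of "sum_wp n L j s" d]
  unfolding col_bound_def by linarith

lemma col_bound_mono_degree: "d \<le> e \<Longrightarrow> col_bound n L d k j s \<le> col_bound n L e k j s"
  unfolding col_bound_def by (intro add_mono max.mono growth_mono) auto

text \<open>Column \<open>j\<close> of \<open>R\<close> dominates column \<open>i\<close> of \<open>L\<close> with every nonzero entry raised to \<open>f\<close>;
  then a bound on \<open>X\<^sub>i\<close> propagates to \<open>X\<^sub>j\<close> along a dependency of weight \<open>f\<close>.\<close>

definition col_le :: "nat \<Rightarrow> emat \<Rightarrow> nat \<Rightarrow> mwp \<Rightarrow> emat \<Rightarrow> nat \<Rightarrow> bool" where
  "col_le n L i f R j \<longleftrightarrow> (\<forall>i'<n. L i' i \<noteq> Zm \<longrightarrow> max f (L i' i) \<le> R i' j)"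

context
  fixes n :: nat and L R :: emat and i j :: nat and f :: mwp
  assumes le: "col_le n L i f R j" and fin: "\<forall>i'<n. R i' j \<noteq> Infm"
begin

lemma col_le_entry_ge: "i' < n \<Longrightarrow> L i' i \<noteq> Zm \<Longrightarrow> max f (L i' i) \<le> R i' j"
  using le unfolding col_le_def by blast

lemma col_le_entry_nonzero: "i' < n \<Longrightarrow> L i' i \<noteq> Zm \<Longrightarrow> R i' j \<noteq> Zm"
  using col_le_entry_ge[of i'] by (cases "L i' i") (auto simp: le_max_iff_disj)

lemma col_le_entry_wp:
  "i' < n \<Longrightarrow> L i' i \<noteq> Zm \<Longrightarrow> Wm \<le> max f (L i' i) \<Longrightarrow> R i' j = Wm \<or> R i' j = Pm"
  using order_trans[OF _ col_le_entry_ge[of i']] fin mwp_ge_Wm by blast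

lemma col_le_entry_p: "i' < n \<Longrightarrow> L i' i \<noteq> Zm \<Longrightarrow> Pm \<le> max f (L i' i) \<Longrightarrow> R i' j = Pm"
  using order_trans[OF _ col_le_entry_ge[of i']] fin mwp_ge_Pm by blast

lemma max_m_transfer: "max_m n L i s \<le> max (max_m n R j s) (sum_wp n R j s)"
proof (rule max_m_le)
  fix i' assume i': "i' < n" "L i' i = Mm"
  then have "R i' j \<noteq> Zm" "R i' j \<noteq> Infm" using col_le_entry_nonzero fin by auto
  then show "s i' \<le> max (max_m n R j s) (sum_wp n R j s)" by (rule le_max_m_sum_wp[OF i'(1)])
qed

lemma max_m_transfer_w: "Wm \<le> f \<Longrightarrow> max_m n L i s \<le> sum_wp n R j s"
proof (rule max_m_le)
  fix i' assume "Wm \<le> f" "i' < n" "L i' i = Mm"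
  then have "R i' j = Wm \<or> R i' j = Pm" by (intro col_le_entry_wp) (auto simp: le_max_iff_disj)
  then show "s i' \<le> sum_wp n R j s" using le_sum_wp \<open>i' < n\<close> by blast
qed

lemma max_m_transfer_p: "f = Pm \<Longrightarrow> max_m n L i s \<le> sum_p n R k j s"
proof (rule max_m_le)
  fix i' assume "f = Pm" "i' < n" "L i' i = Mm"
  then have "R i' j = Pm" by (intro col_le_entry_p) auto
  then show "s i' \<le> sum_p n R k j s" using le_sum_p \<open>i' < n\<close> by blast
qed

lemma sum_wp_transfer: "sum_wp n L i s \<le> sum_wp n R j s"
  unfolding sum_wp_def
proof (intro sum_mono2 subsetI)
  fix i' assume "i' \<in> {i'. i' < n \<and> (L i' i = Wm \<or> L i' i = Pm)}"
  then have "i' < n" "L i' i \<noteq> Zm" "Wm \<le> max f (L i' i)" by (auto simp: le_max_iff_disj)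
  then show "i' \<in> {i'. i' < n \<and> (R i' j = Wm \<or> R i' j = Pm)}" using col_le_entry_wp by blast
qed auto

lemma sum_wp_transfer_p: "f = Pm \<Longrightarrow> sum_wp n L i s \<le> sum_p n R k j s"
proof -
  assume "f = Pm"
  then have "sum_wp n L i s \<le> sum s {i'. i' < n \<and> R i' j = Pm}"
    unfolding sum_wp_def by (intro sum_mono2) (auto intro: col_le_entry_p)
  then show ?thesis using sum_le_sum_p order_trans by blast
qed

lemma p_dependent_transfer: "p_dependent n L i \<Longrightarrow> p_dependent n R j"
  unfolding p_dependent_def using col_le_entry_p by fastforce

lemma sum_p_transfer: "sum_p n L k i s \<le> sum_p n R k j s"
proof -
  have "sum s {i'. i' < n \<and> L i' i = Pm} \<le> sum s {i'. i' < n \<and> R i' j = Pm}"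
    by (intro sum_mono2) (auto intro: col_le_entry_p)
  then show ?thesis unfolding sum_p_def using p_dependent_transfer by auto
qed

lemma col_bound_transfer: "col_bound n L d k i s \<le> col_bound n R d k j s"
proof -
  have "max_m n L i s \<le> max (max_m n R j s) (growth d (sum_wp n R j s))"
    using max_m_transfer[of s] le_growth[of "sum_wp n R j s" d] by linarith
  moreover have "growth d (sum_wp n L i s) \<le> growth d (sum_wp n R j s)"
    using sum_wp_transfer growth_mono by blast
  moreover have "growth d (sum_p n L k i s) \<le> growth d (sum_p n R k j s)"
    using sum_p_transfer growth_mono by blast
  ultimately show ?thesis unfolding col_bound_def by linarith
qed

lemma col_bound_transfer_w:
  "Wm \<le> f \<Longrightarrow> col_bound n L d k i s \<le> 2 * growth d (max (sum_wp n R j s) (sum_p n R k j s))"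
proof -
  assume w: "Wm \<le> f"
  let ?M = "max (sum_wp n R j s) (sum_p n R k j s)"
  have "max_m n L i s \<le> growth d ?M"
    using max_m_transfer_w[OF w, of s] le_growth[of ?M d] by linarith
  moreover have "growth d (sum_wp n L i s) \<le> growth d ?M"
    using sum_wp_transfer[of s] by (intro growth_mono) auto
  moreover have "growth d (sum_p n L k i s) \<le> growth d ?M"
    using sum_p_transfer[of k s] by (intro growth_mono) auto
  ultimately show ?thesis unfolding col_bound_def by linarith
qed

lemma col_bound_transfer_p:
  "f = Pm \<Longrightarrow> col_bound n L d k i s \<le> 2 * growth d (sum_p n R k j s)"
proof -
  assume p: "f = Pm"
  have "max_m n L i s \<le> growth d (sum_p n R k j s)"
    using max_m_transfer_p[OF p, of s k] le_growth[of "sum_p n R k j s" d] by linarith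
  moreover have "growth d (sum_wp n L i s) \<le> growth d (sum_p n R k j s)"
    using sum_wp_transfer_p[OF p] growth_mono by blast
  moreover have "growth d (sum_p n L k i s) \<le> growth d (sum_p n R k j s)"
    using sum_p_transfer growth_mono by blast
  ultimately show ?thesis unfolding col_bound_def by linarith
qed

end

lemma col_bound_counter_le:
  assumes le: "col_le n S j Zm R j" and fin: "\<forall>i<n. R i j \<noteq> Infm"
    and counter: "p_dependent n S j \<Longrightarrow> k \<le> sum_p n R 0 j s"
  shows "col_bound n S E k j s \<le> col_bound n R (1 + E * 2) 0 j s"
proof -
  have "sum_p n S k j s \<le> sum_p n R 0 j s + sum_p n R 0 j s"
    using sum_p_transfer[OF le fin, of 0 s] counter by (auto simp: sum_p_def)
  also have "\<dots> \<le> growth 1 (sum_p n R 0 j s)" by (rule double_le_growth_1)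
  finally have "growth E (sum_p n S k j s) \<le> growth E (growth 1 (sum_p n R 0 j s))"
    by (rule growth_mono) simp
  also have "\<dots> \<le> growth (1 + E * 2) (sum_p n R 0 j s)"
    using growth_growth_le[of E 1] by (simp only: one_add_one)
  finally have "growth E (sum_p n S k j s) \<le> growth (1 + E * 2) (sum_p n R 0 j s)" .
  moreover have "max (max_m n S j s) (growth E (sum_wp n S j s))
      \<le> max (max_m n R j s) (growth (1 + E * 2) (sum_wp n R j s))"
    using max_m_transfer[OF le fin, of s] le_growth[of "sum_wp n R j s" "1 + E * 2"]
      growth_mono[OF sum_wp_transfer[OF le fin, of s], of E "1 + E * 2"] by linarith
  ultimately show ?thesis unfolding col_bound_def by linarith
qed

lemma bounded_by_mono:
  assumes "bounded_by n c L" "\<And>i j. i < n \<Longrightarrow> j < n \<Longrightarrow> L i j \<le> L' i j" "inf_free n L'"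
  shows "bounded_by n c L'"
proof -
  obtain d where d: "\<forall>s t. exec c s t \<longrightarrow> (\<forall>j<n. t j \<le> col_bound n L d 0 j s)"
    using assms(1) unfolding bounded_by_def by blast
  have "col_bound n L d 0 j s \<le> col_bound n L' d 0 j s" if "j < n" for j s
    by (rule col_bound_transfer[where f = Zm]) (use assms(2,3) that in \<open>auto simp: col_le_def inf_free_def\<close>)
  then show ?thesis unfolding bounded_by_def using d order_trans by blast
qed

section \<open>Sequential composition\<close>

definition emat_mul :: "nat \<Rightarrow> emat \<Rightarrow> emat \<Rightarrow> emat" where
  "emat_mul n L1 L2 i j = msum (map (\<lambda>k. mmul (L1 i k) (L2 k j)) [0..<n])"

lemma emat_mul_ge: "k < n \<Longrightarrow> mmul (L1 i k) (L2 k j) \<le> emat_mul n L1 L2 i j"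
  unfolding emat_mul_def by (rule msum_ge) auto

lemma inf_free_emat_mul_factors:
  assumes "inf_free n (emat_mul n L1 L2)"
  shows "inf_free n L1" "inf_free n L2"
  using assms emat_mul_ge[of _ n L1 _ L2] unfolding inf_free_def
  by (metis mmul_Infm mwp_le_simps(4))+

lemma col_le_emat_mul:
  assumes k: "k < n" and nz: "L2 k j \<noteq> Zm"
  shows "col_le n L1 k (L2 k j) (emat_mul n L1 L2) j"
  unfolding col_le_def
proof (intro allI impI)
  fix i' assume "L1 i' k \<noteq> Zm"
  then have "max (L2 k j) (L1 i' k) = mmul (L1 i' k) (L2 k j)" using nz by (simp add: mmul_nonzero max.commute)
  then show "max (L2 k j) (L1 i' k) \<le> emat_mul n L1 L2 i' j" using emat_mul_ge[OF k] by simp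
qed

lemma seq_arith:
  fixes d1 d2 n x w p X W P :: nat
  defines "G \<equiv> d1 + 2 * n + d2 * (d1 + 2 * n + 1)"
  assumes x: "x \<le> max X (growth d1 W) + growth d1 P"
    and w: "w \<le> n * (2 * growth d1 W)" and p: "p \<le> n * (2 * growth d1 P)"
  shows "max x (growth d2 w) + growth d2 p \<le> max X (growth (G + 1) W) + growth (G + 1) P"
proof -
  have "growth d2 w \<le> growth G W"
    using growth_mono[OF w order_refl] growth_mult_growth_le unfolding G_def by (rule order_trans)
  moreover have "growth d2 p \<le> growth G P"
    using growth_mono[OF p order_refl] growth_mult_growth_le unfolding G_def by (rule order_trans)
  moreover have "growth d1 W \<le> growth (G + 1) W" "growth G W \<le> growth (G + 1) W"
    by (auto intro: growth_mono simp: G_def)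
  moreover have "growth d1 P + growth G P \<le> growth (G + 1) P"
    using growth_add_le[of d1 P G] by (simp add: G_def)
  ultimately show ?thesis using x by (simp add: max_def split: if_splits; linarith)
qed

lemma col_bound_seq:
  assumes fin: "inf_free n (emat_mul n L1 L2)"
    and t: "\<forall>k<n. t k \<le> col_bound n L1 d1 0 k s"
    and u: "\<forall>j<n. u j \<le> col_bound n L2 d2 0 j t"
    and j: "j < n"
  shows "u j \<le> col_bound n (emat_mul n L1 L2) (d1 + 2 * n + d2 * (d1 + 2 * n + 1) + 1) 0 j s"
proof -
  let ?N = "emat_mul n L1 L2"
  let ?X = "max_m n ?N j s" and ?W = "sum_wp n ?N j s" and ?P = "sum_p n ?N 0 j s"
  have fin_j: "\<forall>i<n. ?N i j \<noteq> Infm" using fin j unfolding inf_free_def by blast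
  have m_part: "max_m n L2 j t \<le> max ?X (growth d1 ?W) + growth d1 ?P"
  proof (rule max_m_le)
    fix k assume k: "k < n" "L2 k j = Mm"
    have "t k \<le> col_bound n L1 d1 0 k s" using t k by blast
    also have "\<dots> \<le> col_bound n ?N d1 0 j s"
      by (rule col_bound_transfer[OF col_le_emat_mul fin_j]) (use k in auto)
    finally show "t k \<le> max ?X (growth d1 ?W) + growth d1 ?P" unfolding col_bound_def .
  qed
  have w_part: "sum_wp n L2 j t \<le> n * (2 * growth d1 ?W)"
  proof (rule sum_wp_le_card_mult)
    fix k assume k: "k < n" "L2 k j = Wm \<or> L2 k j = Pm"
    have "t k \<le> col_bound n L1 d1 0 k s" using t k by blast
    also have "\<dots> \<le> 2 * growth d1 (max ?W ?P)"
      by (rule col_bound_transfer_w[OF col_le_emat_mul fin_j]) (use k in auto)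
    also have "max ?W ?P = ?W" using sum_p_0_le_sum_wp by (rule max_absorb1)
    finally show "t k \<le> 2 * growth d1 ?W" .
  qed
  have p_part: "sum_p n L2 0 j t \<le> n * (2 * growth d1 ?P)"
  proof (rule sum_p_0_le_card_mult)
    fix k assume k: "k < n" "L2 k j = Pm"
    have "t k \<le> col_bound n L1 d1 0 k s" using t k by blast
    also have "\<dots> \<le> 2 * growth d1 ?P"
      by (rule col_bound_transfer_p[OF col_le_emat_mul fin_j]) (use k in auto)
    finally show "t k \<le> 2 * growth d1 ?P" .
  qed
  have "u j \<le> col_bound n L2 d2 0 j t" using u j by blast
  also have "\<dots> \<le> col_bound n ?N (d1 + 2 * n + d2 * (d1 + 2 * n + 1) + 1) 0 j s"
    unfolding col_bound_def by (rule seq_arith[OF m_part w_part p_part])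
  finally show ?thesis .
qed

section \<open>Iteration\<close>

inductive_cases execn_0E: "execn c 0 s t"
inductive_cases execn_SucE: "execn c (Suc k) s t"

lemma execn_Suc_last: "execn c (Suc k) s u \<Longrightarrow> \<exists>t. execn c k s t \<and> exec c t u"
proof (induction k arbitrary: s)
  case 0
  then show ?case by (auto elim: execn_SucE execn_0E intro: exec_execn.N0)
next
  case (Suc k)
  then obtain t where "exec c s t" "execn c (Suc k) t u" by (auto elim: execn_SucE)
  with Suc.IH obtain t' where "execn c k t t'" "exec c t' u" by blast
  with \<open>exec c s t\<close> show ?case by (auto intro: exec_execn.NSuc)
qed

text \<open>The loop counter increment \<open>P' = P + 1\<close> pays for the extra term \<open>2 * growth G P\<close>.\<close>

lemma iteration_arith:
  fixes E0 d n x w p X W P P' :: nat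
  defines "E \<equiv> E0 + 2 * n + d * (E0 + 2 * n + 1) + 2"
  assumes x: "x \<le> max X (growth E W) + growth E P"
    and w: "w \<le> n * (2 * growth E0 (max W P))" and p: "p \<le> n * (2 * growth E0 P)"
    and P': "P' = P + 1 \<or> P' = 0 \<and> P = 0"
  shows "max x (growth d w) + growth d p \<le> max X (growth E W) + growth E P'"
proof -
  define G where "G = E0 + 2 * n + d * (E0 + 2 * n + 1)"
  have E: "E = G + 2" unfolding E_def G_def ..
  have "growth d w \<le> growth G (max W P)"
    using growth_mono[OF w order_refl] growth_mult_growth_le unfolding G_def by (rule order_trans)
  also have "\<dots> \<le> growth G W + growth G P" by (rule growth_max_le)
  finally have gw: "growth d w \<le> growth G W + growth G P" .
  have gp: "growth d p \<le> growth G P"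
    using growth_mono[OF p order_refl] growth_mult_growth_le unfolding G_def by (rule order_trans)
  have "growth G W \<le> growth E W" unfolding E by (rule growth_mono) auto
  with x gw gp have main: "max x (growth d w) + growth d p \<le> max X (growth E W) + growth E P + 2 * growth G P"
    by (simp add: max_def split: if_splits; linarith)
  from P' show ?thesis
  proof
    assume "P' = P + 1"
    then have "growth E P + 2 * growth G P \<le> growth E P'"
      using growth_plus_double_growth_le[of G P] unfolding E by simp
    then show ?thesis using main by linarith
  next
    assume "P' = 0 \<and> P = 0"
    then show ?thesis using main by simp
  qed
qed

text \<open>The properties of \<open>M[a]\<^sup>*\<close> guaranteed by the side conditions of (L\<open>\<^sup>\<infinity>\<close>) and
  (W\<open>\<^sup>\<infinity>\<close>).\<close>

locale closed_emat =
  fixes n :: nat and S :: emat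
  assumes inf_free: "inf_free n S"
    and diag_Mm: "j < n \<Longrightarrow> S j j = Mm"
    and transitive: "i < n \<Longrightarrow> k < n \<Longrightarrow> j < n \<Longrightarrow> mmul (S i k) (S k j) \<le> S i j"
begin

lemma col_inf_free: "j < n \<Longrightarrow> \<forall>i<n. S i j \<noteq> Infm"
  using inf_free unfolding inf_free_def by blast

lemma col_le_entry: "i < n \<Longrightarrow> j < n \<Longrightarrow> S i j \<noteq> Zm \<Longrightarrow> col_le n S i (S i j) S j"
  unfolding col_le_def using transitive by (metis mmul_nonzero max.commute)

definition deps :: "nat \<Rightarrow> nat set" where
  "deps j = {i. i < n \<and> S i j \<noteq> Zm}"

lemma finite_deps: "finite (deps j)"
  unfolding deps_def by auto

lemma card_deps_le: "card (deps j) \<le> n"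
  using card_mono[of "{..<n}" "deps j"] unfolding deps_def by auto

lemma mem_deps_self: "j < n \<Longrightarrow> j \<in> deps j"
  unfolding deps_def using diag_Mm by auto

lemma deps_subset: "i < n \<Longrightarrow> j < n \<Longrightarrow> S i j \<noteq> Zm \<Longrightarrow> deps i \<subseteq> deps j"
  unfolding deps_def using col_le_entry_nonzero[OF col_le_entry col_inf_free] by blast

text \<open>By transitivity, \<open>j \<in> deps i\<close> would force \<open>S j j \<ge> S i j \<ge> w\<close>.\<close>

lemma card_deps_less:
  assumes i: "i < n" and j: "j < n" and w: "Wm \<le> S i j"
  shows "card (deps i) < card (deps j)"
proof (rule psubset_card_mono[OF finite_deps])
  have nz: "S i j \<noteq> Zm" using w by auto
  have "j \<notin> deps i"
  proof
    assume "j \<in> deps i"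
    then have "mmul (S j i) (S i j) = max (S j i) (S i j)" using nz by (simp add: deps_def mmul_nonzero)
    then have "Wm \<le> S j j" using transitive[OF j i j] w by (metis le_max_iff_disj order_trans)
    then show False using diag_Mm[OF j] by simp
  qed
  then show "deps i \<subset> deps j" using deps_subset[OF i j nz] mem_deps_self[OF j] by blast
qed

lemma iterate_step:
  fixes E0 d :: nat
  defines "E \<equiv> E0 + 2 * n + d * (E0 + 2 * n + 1) + 2"
  assumes body: "\<forall>j<n. u j \<le> col_bound n S d 0 j t"
    and lower: "\<And>i. i < n \<Longrightarrow> card (deps i) \<le> m \<Longrightarrow> t i \<le> col_bound n S E0 k i s"
    and current: "\<And>i. i < n \<Longrightarrow> card (deps i) \<le> Suc m \<Longrightarrow> t i \<le> col_bound n S E k i s"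
    and j: "j < n" and card_j: "card (deps j) \<le> Suc m"
  shows "u j \<le> col_bound n S E (Suc k) j s"
proof -
  let ?X = "max_m n S j s" and ?W = "sum_wp n S j s" and ?P = "sum_p n S k j s"
  note transfer = col_le_entry[OF _ j] col_inf_free[OF j]
  have m_part: "max_m n S j t \<le> max ?X (growth E ?W) + growth E ?P"
  proof (rule max_m_le)
    fix i assume i: "i < n" "S i j = Mm"
    then have "card (deps i) \<le> Suc m"
      using card_mono[OF finite_deps deps_subset[OF i(1) j]] card_j by simp
    then have "t i \<le> col_bound n S E k i s" using current i by blast
    also have "\<dots> \<le> col_bound n S E k j s"
      by (rule col_bound_transfer[OF transfer]) (use i in auto)
    finally show "t i \<le> max ?X (growth E ?W) + growth E ?P" unfolding col_bound_def .
  qed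
  have w_part: "sum_wp n S j t \<le> n * (2 * growth E0 (max ?W ?P))"
  proof (rule sum_wp_le_card_mult)
    fix i assume i: "i < n" "S i j = Wm \<or> S i j = Pm"
    then have "card (deps i) \<le> m" using card_deps_less[OF i(1) j] card_j by auto
    then have "t i \<le> col_bound n S E0 k i s" using lower i by blast
    also have "\<dots> \<le> 2 * growth E0 (max ?W ?P)"
      by (rule col_bound_transfer_w[OF transfer]) (use i in auto)
    finally show "t i \<le> 2 * growth E0 (max ?W ?P)" .
  qed
  have p_part: "sum_p n S 0 j t \<le> n * (2 * growth E0 ?P)"
  proof (rule sum_p_0_le_card_mult)
    fix i assume i: "i < n" "S i j = Pm"
    then have "card (deps i) \<le> m" using card_deps_less[OF i(1) j] card_j by auto
    then have "t i \<le> col_bound n S E0 k i s" using lower i by blast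
    also have "\<dots> \<le> 2 * growth E0 ?P"
      by (rule col_bound_transfer_p[OF transfer]) (use i in auto)
    finally show "t i \<le> 2 * growth E0 ?P" .
  qed
  have "u j \<le> col_bound n S d 0 j t" using body j by blast
  also have "\<dots> \<le> col_bound n S E (Suc k) j s"
    unfolding col_bound_def E_def
    by (rule iteration_arith[OF m_part[unfolded E_def] w_part p_part sum_p_Suc_cases])
  finally show ?thesis .
qed

text \<open>Induction on the number of dependencies of a column: by \<open>card_deps_less\<close>, the w- and
  p-dependencies of column \<open>j\<close> have fewer dependencies, so their bound \<open>E0\<close> is already
  known; only the m-dependencies share the bound being established.\<close>

lemma iterate_bound:
  assumes "bounded_by n c S"
  shows "\<exists>E. \<forall>k s t. execn c k s t \<longrightarrow> (\<forall>j<n. t j \<le> col_bound n S E k j s)"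
proof -
  obtain d where body: "\<forall>s t. exec c s t \<longrightarrow> (\<forall>j<n. t j \<le> col_bound n S d 0 j s)"
    using assms unfolding bounded_by_def by blast
  have "\<exists>E. \<forall>k s t. execn c k s t \<longrightarrow>
           (\<forall>j<n. card (deps j) \<le> m \<longrightarrow> t j \<le> col_bound n S E k j s)" for m
  proof (induction m)
    case 0
    have "card (deps j) \<noteq> 0" if "j < n" for j
      using mem_deps_self[OF that] finite_deps by (auto simp: card_eq_0_iff)
    then show ?case by blast
  next
    case (Suc m)
    then obtain E0 where lower:
      "\<forall>k s t. execn c k s t \<longrightarrow> (\<forall>j<n. card (deps j) \<le> m \<longrightarrow> t j \<le> col_bound n S E0 k j s)"
      by blast
    define E where "E = E0 + 2 * n + d * (E0 + 2 * n + 1) + 2"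
    have "execn c k s u \<longrightarrow> (\<forall>j<n. card (deps j) \<le> Suc m \<longrightarrow> u j \<le> col_bound n S E k j s)"
      for k s u
    proof (induction k arbitrary: u)
      case 0
      show ?case
        using le_col_bound[where L = S and d = E and k = 0 and s = s] diag_Mm by (auto elim: execn_0E)
    next
      case (Suc k)
      show ?case
      proof (intro impI allI)
        fix j assume "execn c (Suc k) s u" and j: "j < n" "card (deps j) \<le> Suc m"
        then obtain t where t: "execn c k s t" "exec c t u" using execn_Suc_last by blast
        show "u j \<le> col_bound n S E (Suc k) j s"
          unfolding E_def
          by (rule iterate_step[OF _ _ _ j]) (use body lower Suc.IH t in \<open>auto simp: E_def\<close>)
      qed
    qed
    then show ?case by blast
  qed
  then obtain E where
    "\<forall>k s t. execn c k s t \<longrightarrow> (\<forall>j<n. card (deps j) \<le> n \<longrightarrow> t j \<le> col_bound n S E k j s)"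
    by blast
  then show ?thesis using card_deps_le by blast
qed

end

section \<open>Closure\<close>

lemma mat_pow_le_mat_star: "mat_pow n M k i j a \<le> mat_star n M i j a"
  unfolding mat_star_def by (rule Max_ge) auto

lemma mat_star_attained: "\<exists>k. mat_star n M i j a = mat_pow n M k i j a"
proof -
  have "mat_star n M i j a \<in> range (\<lambda>k. mat_pow n M k i j a)"
    unfolding mat_star_def by (rule Max_in) auto
  then show ?thesis by auto
qed

lemma le_mat_star: "i < n \<Longrightarrow> M i j a \<le> mat_star n M i j a"
proof -
  assume i: "i < n"
  have "mmul (unit_mat i i a) (M i j a) \<le> mat_pow n M 1 i j a"
    using i by (simp add: mat_mul_def msum_ge)
  then show ?thesis using mat_pow_le_mat_star[of n M 1 i j a] by (simp add: unit_mat_def)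
qed

lemma mmul_mat_pow_le:
  assumes fin: "\<And>k i j. i < n \<Longrightarrow> j < n \<Longrightarrow> mat_pow n M k i j a \<noteq> Infm"
    and i: "i < n" and k: "k < n"
  shows "j < n \<Longrightarrow> mmul (mat_pow n M x i k a) (mat_pow n M y k j a) \<le> mat_pow n M (x + y) i j a"
proof (induction y arbitrary: j)
  case 0
  show ?case using fin[OF i k] by (cases "k = j") (simp_all add: unit_mat_def)
next
  case (Suc y)
  let ?xs = "map (\<lambda>m. mmul (mat_pow n M y k m a) (M m j a)) [0..<n]"
  have eq: "mat_pow n M (Suc y) k j a = msum ?xs" by (simp add: mat_mul_def)
  from msum_Zm_or_mem[of ?xs] show ?case
  proof
    assume "msum ?xs = Zm"
    then show ?thesis using eq fin[OF i k] by simp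
  next
    assume "msum ?xs \<in> set ?xs"
    then obtain m where m: "m < n" "msum ?xs = mmul (mat_pow n M y k m a) (M m j a)" by auto
    have "mmul (mat_pow n M x i k a) (mat_pow n M (Suc y) k j a)
        = mmul (mmul (mat_pow n M x i k a) (mat_pow n M y k m a)) (M m j a)"
      using eq m by (simp add: mmul_assoc)
    also have "\<dots> \<le> mmul (mat_pow n M (x + y) i m a) (M m j a)"
      by (rule mmul_mono[OF Suc.IH[OF m(1)] order_refl])
    also have "\<dots> \<le> mat_pow n M (x + Suc y) i j a"
      using m(1) by (simp add: mat_mul_def msum_ge)
    finally show ?thesis .
  qed
qed

lemma mmul_mat_star_le:
  assumes fin: "inf_free n (\<lambda>i j. mat_star n M i j a)" and ijk: "i < n" "k < n" "j < n"
  shows "mmul (mat_star n M i k a) (mat_star n M k j a) \<le> mat_star n M i j a"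
proof -
  have fin_pow: "mat_pow n M m i' j' a \<noteq> Infm" if "i' < n" "j' < n" for m i' j'
    using fin that mat_pow_le_mat_star[of n M m i' j' a] unfolding inf_free_def by auto
  obtain x where x: "mat_star n M i k a = mat_pow n M x i k a" using mat_star_attained by blast
  obtain y where y: "mat_star n M k j a = mat_pow n M y k j a" using mat_star_attained by blast
  have "mmul (mat_star n M i k a) (mat_star n M k j a) \<le> mat_pow n M (x + y) i j a"
    unfolding x y by (rule mmul_mat_pow_le[OF fin_pow ijk])
  also have "\<dots> \<le> mat_star n M i j a" by (rule mat_pow_le_mat_star)
  finally show ?thesis .
qed

lemma closed_emat_mat_star:
  assumes fin: "inf_free n R" and star_le: "\<And>i j. mat_star n M i j a \<le> R i j"
    and diag: "\<And>j. mat_star n M j j a \<noteq> Mm \<Longrightarrow> R j j = Infm"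
  shows "closed_emat n (\<lambda>i j. mat_star n M i j a)"
proof
  show fin_star: "inf_free n (\<lambda>i j. mat_star n M i j a)" by (rule inf_free_mono[OF star_le fin])
  show "mat_star n M j j a = Mm" if "j < n" for j
    using diag fin that unfolding inf_free_def by blast
  show "mmul (mat_star n M i k a) (mat_star n M k j a) \<le> mat_star n M i j a"
    if "i < n" "k < n" "j < n" for i k j
    using mmul_mat_star_le[OF fin_star that] .
qed

text \<open>The common part of (L\<open>\<^sup>\<infinity>\<close>) and (W\<open>\<^sup>\<infinity>\<close>): \<open>C'\<close> runs its body \<open>C\<close> some \<open>k\<close> times,
  and \<open>k\<close> is bounded by the p-dependencies of \<open>R\<close> wherever it enters the bound.\<close>

lemma bounded_by_iterate:
  fixes n :: nat and M :: mat and a :: choice and R :: emat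
  defines "S \<equiv> \<lambda>i j. mat_star n M i j a"
  assumes fin: "inf_free n R" and star_le: "\<And>i j. S i j \<le> R i j"
    and diag: "\<And>j. S j j \<noteq> Mm \<Longrightarrow> R j j = Infm"
    and body: "bounded_by n C (\<lambda>i j. M i j a)"
    and runs: "\<And>s t j. exec C' s t \<Longrightarrow> j < n \<Longrightarrow>
      \<exists>k. execn C k s t \<and> (p_dependent n S j \<longrightarrow> k \<le> sum_p n R 0 j s)"
  shows "bounded_by n C' R"
proof -
  interpret closed_emat n S
    unfolding S_def by (rule closed_emat_mat_star[OF fin star_le[unfolded S_def] diag[unfolded S_def]])
  have "bounded_by n C S" by (rule bounded_by_mono[OF body _ inf_free]) (simp add: S_def le_mat_star)
  then obtain E where E: "\<forall>k s t. execn C k s t \<longrightarrow> (\<forall>j<n. t j \<le> col_bound n S E k j s)"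
    using iterate_bound by blast
  show ?thesis unfolding bounded_by_def
  proof (intro exI[of _ "1 + E * 2"] allI impI)
    fix s t j assume "exec C' s t" "j < n"
    then obtain k where k: "execn C k s t" "p_dependent n S j \<Longrightarrow> k \<le> sum_p n R 0 j s"
      using runs by blast
    have "col_le n S j Zm R j" using star_le unfolding col_le_def by simp
    moreover have "\<forall>i<n. R i j \<noteq> Infm" using fin \<open>j < n\<close> unfolding inf_free_def by blast
    ultimately have "col_bound n S E k j s \<le> col_bound n R (1 + E * 2) 0 j s"
      using k(2) by (rule col_bound_counter_le)
    moreover have "t j \<le> col_bound n S E k j s" using E k(1) \<open>j < n\<close> by blast
    ultimately show "t j \<le> col_bound n R (1 + E * 2) 0 j s" by linarith
  qed
qed

section \<open>Soundness\<close>

lemma add_le_col_bound_m_p: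
  assumes "i < n" "i' < n" "L i j = Mm" "L i' j = Pm"
  shows "s i + s i' \<le> col_bound n L 1 k j s"
  using le_max_m[of i n L j s] le_sum_p[of i' n L j s k] le_growth[of "sum_p n L k j s" 1] assms
  unfolding col_bound_def by fastforce

lemma add_le_col_bound_wp:
  assumes "i < n" "i' < n" "L i j = Wm \<or> L i j = Pm" "L i' j = Wm \<or> L i' j = Pm"
  shows "s i + s i' \<le> col_bound n L 1 k j s"
proof -
  have "s i + s i' \<le> sum_wp n L j s + sum_wp n L j s" using le_sum_wp assms by (meson add_mono)
  also have "\<dots> \<le> growth 1 (sum_wp n L j s)" by (rule double_le_growth_1)
  finally show ?thesis unfolding col_bound_def by linarith
qed

lemma mult_le_col_bound:
  assumes "i < n" "i' < n" "L i j = Wm" "L i' j = Wm"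
  shows "s i * s i' \<le> col_bound n L 1 k j s"
proof -
  have "s i * s i' \<le> sum_wp n L j s * sum_wp n L j s"
    using le_sum_wp[of i n L j s] le_sum_wp[of i' n L j s] assms by (simp add: mult_le_mono)
  also have "\<dots> \<le> growth 1 (sum_wp n L j s)" unfolding growth_def by simp
  finally show ?thesis unfolding col_bound_def by linarith
qed

lemma EA_vec_eval:
  assumes "a k \<in> {0, 1, 2}"
  shows "vec_add (scal_vec (delta 0 k) (vpair i Mm j Pm))
           (vec_add (scal_vec (delta 1 k) (vpair i Pm j Mm)) (scal_vec (delta 2 k) (vpair i Wm j Wm))) r a
    = (if a k = 0 then vpair i Mm j Pm r a else if a k = 1 then vpair i Pm j Mm r a else vpair i Wm j Wm r a)"
proof -
  have "vpair i x j y r a \<noteq> Infm" if "x \<noteq> Infm" "y \<noteq> Infm" for x y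
    using that by (simp add: vpair_def vsingle_def madd_def max_def)
  then show ?thesis using assms by (auto simp: vec_add_def scal_vec_def delta_def madd_def)
qed

lemma aval_le_col_bound:
  assumes "etyp n e K v" "\<forall>k\<in>K. a k \<in> {0, 1, 2}" "\<forall>r<n. L r j = v r a"
  shows "aval e s \<le> col_bound n L 1 k j s"
  using assms
proof (induction rule: etyp.induct)
  case (ES i n)
  then show ?case using le_col_bound[of i n L j s 1 k] by (simp add: vsingle_def)
next
  case (EM i n i')
  then show ?case using mult_le_col_bound[of i n i' L j s k] by (simp add: vpair_def vsingle_def madd_def)
next
  case (EA_sub i n i' k')
  then have "L i j \<noteq> Zm" "L i j \<noteq> Infm"
    using EA_vec_eval[where a = a and k = k' and i = i and j = i'] by (auto simp: vpair_def vsingle_def madd_def max_def)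
  then show ?case using le_col_bound[of i n L j s 1 k] EA_sub(1) by simp
next
  case (EA_plus i n i' k')
  then have "a k' \<in> {0, 1, 2}" by simp
  then have "L i j = (if a k' = 0 then (if i = i' then Pm else Mm) else if a k' = 1 then Pm else Wm)"
    and "L i' j = (if a k' = 0 then Pm else if a k' = 1 then (if i = i' then Pm else Mm) else Wm)"
    using EA_plus EA_vec_eval[where a = a and k = k' and i = i and j = i']
    by (auto simp: vpair_def vsingle_def madd_def max_def)
  then show ?case
    using EA_plus(1,2) add_le_col_bound_m_p[of i n i' L j s k] add_le_col_bound_m_p[of i' n i L j s k]
      add_le_col_bound_wp[of i n i' L j s k]
    by (auto simp: add.commute split: if_splits)
qed

inductive_cases AssignE: "exec (Assign x e) s t"
inductive_cases SeqE: "exec (Seq c1 c2) s u"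
inductive_cases IfE: "exec (If b c1 c2) s t"
inductive_cases LoopE: "exec (Loop x c) s t"

lemma exec_While_execn: "exec w s t \<Longrightarrow> w = While b c \<Longrightarrow> \<exists>k. execn c k s t"
proof (induction rule: exec_execn.inducts(1)[where ?P2.0 = "\<lambda>_ _ _ _. True"])
  case (WhileF b s C)
  then show ?case by (blast intro: exec_execn.N0)
next
  case (WhileT b s C t u)
  then show ?case by (blast intro: exec_execn.NSuc)
qed auto

lemma bounded_by_assign:
  assumes "j < n" "etyp n e K v" "\<forall>k\<in>K. a k \<in> {0, 1, 2}"
  shows "bounded_by n (Assign j e) (\<lambda>i j'. col_replace j v i j' a)"
  unfolding bounded_by_def
proof (intro exI[of _ 1] allI impI)
  fix s t j' assume "exec (Assign j e) s t" "j' < n"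
  then have t: "t = s(j := aval e s)" by (auto elim: AssignE)
  show "t j' \<le> col_bound n (\<lambda>i j'. col_replace j v i j' a) 1 0 j' s"
  proof (cases "j' = j")
    case True
    then show ?thesis using t aval_le_col_bound[OF assms(2,3)] by (simp add: col_replace_def)
  next
    case False
    have "s j' \<le> col_bound n (\<lambda>i j'. col_replace j v i j' a) 1 0 j' s"
      by (rule le_col_bound) (use \<open>j' < n\<close> False in \<open>auto simp: col_replace_def unit_mat_def\<close>)
    then show ?thesis using False t by simp
  qed
qed

lemma bounded_by_seq:
  assumes "bounded_by n C1 L1" "bounded_by n C2 L2" and fin: "inf_free n (emat_mul n L1 L2)"
  shows "bounded_by n (Seq C1 C2) (emat_mul n L1 L2)"
proof -
  obtain d1 d2 where
    d1: "\<forall>s t. exec C1 s t \<longrightarrow> (\<forall>j<n. t j \<le> col_bound n L1 d1 0 j s)" and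
    d2: "\<forall>s t. exec C2 s t \<longrightarrow> (\<forall>j<n. t j \<le> col_bound n L2 d2 0 j s)"
    using assms(1,2) unfolding bounded_by_def by blast
  show ?thesis unfolding bounded_by_def
  proof (intro exI allI impI)
    fix s u j assume "exec (Seq C1 C2) s u" "j < n"
    then obtain t where "exec C1 s t" "exec C2 t u" by (auto elim: SeqE)
    then show "u j \<le> col_bound n (emat_mul n L1 L2) (d1 + 2 * n + d2 * (d1 + 2 * n + 1) + 1) 0 j s"
      using col_bound_seq[OF fin _ _ \<open>j < n\<close>] d1 d2 by blast
  qed
qed

lemma bounded_by_if:
  assumes "bounded_by n C1 L1" "bounded_by n C2 L2" and fin: "inf_free n (\<lambda>i j. max (L1 i j) (L2 i j))"
  shows "bounded_by n (If b C1 C2) (\<lambda>i j. max (L1 i j) (L2 i j))"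
proof -
  let ?N = "\<lambda>i j. max (L1 i j) (L2 i j)"
  obtain d1 d2 where
    d1: "\<forall>s t. exec C1 s t \<longrightarrow> (\<forall>j<n. t j \<le> col_bound n ?N d1 0 j s)" and
    d2: "\<forall>s t. exec C2 s t \<longrightarrow> (\<forall>j<n. t j \<le> col_bound n ?N d2 0 j s)"
    using bounded_by_mono[OF assms(1) _ fin] bounded_by_mono[OF assms(2) _ fin]
    unfolding bounded_by_def by fastforce
  show ?thesis unfolding bounded_by_def
  proof (intro exI[of _ "max d1 d2"] allI impI)
    fix s t j assume "exec (If b C1 C2) s t" "j < n"
    then have "t j \<le> col_bound n ?N d1 0 j s \<or> t j \<le> col_bound n ?N d2 0 j s"
      using d1 d2 by (auto elim: IfE)
    then show "t j \<le> col_bound n ?N (max d1 d2) 0 j s"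
      using col_bound_mono_degree[of d1 "max d1 d2"] col_bound_mono_degree[of d2 "max d1 d2"]
      by (meson max.cobounded1 max.cobounded2 order_trans)
  qed
qed

lemma loop_mat_eq:
  "loop_mat n l M i j a = max (mat_star n M i j a)
     (max (if i = j \<and> mat_star n M j j a \<noteq> Mm then Infm else Zm)
          (if i = l \<and> p_dependent n (\<lambda>i j. mat_star n M i j a) j then Pm else Zm))"
  by (simp add: loop_mat_def Let_def madd_def p_dependent_def)

lemma while_mat_eq:
  "while_mat n M i j a = max (mat_star n M i j a)
     (max (if i = j \<and> mat_star n M j j a \<noteq> Mm then Infm else Zm)
          (if mat_star n M i j a = Pm then Infm else Zm))"
  by (simp add: while_mat_def Let_def madd_def)

lemma bounded_by_loop:
  assumes l: "l < n" and body: "bounded_by n C (\<lambda>i j. M i j a)"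
    and fin: "inf_free n (\<lambda>i j. loop_mat n l M i j a)"
  shows "bounded_by n (Loop l C) (\<lambda>i j. loop_mat n l M i j a)"
proof (rule bounded_by_iterate[where M = M and a = a, OF fin _ _ body])
  let ?S = "\<lambda>i j. mat_star n M i j a"
  note eq = loop_mat_eq[of n l M _ _ a]
  show "?S i j \<le> loop_mat n l M i j a" for i j by (simp add: eq)
  show "?S j j \<noteq> Mm \<Longrightarrow> loop_mat n l M j j a = Infm" for j by (simp add: eq)
  fix s t j assume "exec (Loop l C) s t" "j < n"
  moreover have "s l \<le> sum_p n (\<lambda>i j. loop_mat n l M i j a) 0 j s" if "p_dependent n ?S j"
  proof (rule le_sum_p[OF l])
    have "Pm \<le> loop_mat n l M l j a" using that by (simp add: eq le_max_iff_disj)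
    then show "loop_mat n l M l j a = Pm" using fin l \<open>j < n\<close> mwp_ge_Pm unfolding inf_free_def by blast
  qed
  ultimately show "\<exists>k. execn C k s t \<and>
      (p_dependent n ?S j \<longrightarrow> k \<le> sum_p n (\<lambda>i j. loop_mat n l M i j a) 0 j s)"
    by (auto elim: LoopE)
qed

lemma bounded_by_while:
  assumes body: "bounded_by n C (\<lambda>i j. M i j a)"
    and fin: "inf_free n (\<lambda>i j. while_mat n M i j a)"
  shows "bounded_by n (While b C) (\<lambda>i j. while_mat n M i j a)"
proof (rule bounded_by_iterate[where M = M and a = a, OF fin _ _ body])
  let ?S = "\<lambda>i j. mat_star n M i j a"
  note eq = while_mat_eq[of n M _ _ a]
  show "?S i j \<le> while_mat n M i j a" for i j by (simp add: eq)
  show "?S j j \<noteq> Mm \<Longrightarrow> while_mat n M j j a = Infm" for j by (simp add: eq)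
  fix s t j assume "exec (While b C) s t" "j < n"
  moreover have "\<not> p_dependent n ?S j"
  proof
    assume "p_dependent n ?S j"
    then obtain i where "i < n" "?S i j = Pm" unfolding p_dependent_def by blast
    then have "while_mat n M i j a = Infm" by (simp add: eq)
    with fin \<open>i < n\<close> \<open>j < n\<close> show False unfolding inf_free_def by blast
  qed
  ultimately show "\<exists>k. execn C k s t \<and>
      (p_dependent n ?S j \<longrightarrow> k \<le> sum_p n (\<lambda>i j. while_mat n M i j a) 0 j s)"
    using exec_While_execn by blast
qed

theorem ctyp_bounded_by:
  "ctyp n c K M \<Longrightarrow> \<forall>k\<in>K. a k \<in> {0, 1, 2} \<Longrightarrow> inf_free n (\<lambda>i j. M i j a) \<Longrightarrow>
    bounded_by n c (\<lambda>i j. M i j a)"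
proof (induction rule: ctyp.induct)
  case (A j n e K v)
  then show ?case by (intro bounded_by_assign)
next
  case (C n C1 K1 M1 C2 K2 M2)
  have mul: "(\<lambda>i j. mat_mul n M1 M2 i j a) = emat_mul n (\<lambda>i j. M1 i j a) (\<lambda>i j. M2 i j a)"
    by (intro ext) (simp add: mat_mul_def emat_mul_def)
  show ?case
    using C inf_free_emat_mul_factors[of n "\<lambda>i j. M1 i j a" "\<lambda>i j. M2 i j a"]
    unfolding mul by (intro bounded_by_seq) auto
next
  case (I n C1 K1 M1 C2 K2 M2 b)
  have add: "(\<lambda>i j. mat_add M1 M2 i j a) = (\<lambda>i j. max (M1 i j a) (M2 i j a))"
    by (simp add: mat_add_def madd_def)
  have fin: "inf_free n (\<lambda>i j. max (M1 i j a) (M2 i j a))" using I.prems(2) unfolding add .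
  have "inf_free n (\<lambda>i j. M1 i j a)" "inf_free n (\<lambda>i j. M2 i j a)"
    by (rule inf_free_mono[OF _ fin], simp)+
  then show ?case using I unfolding add by (intro bounded_by_if) auto
next
  case (L l n C K M)
  have "inf_free n (\<lambda>i j. M i j a)"
    by (rule inf_free_mono[OF _ L.prems(2)]) (metis le_mat_star loop_mat_eq max.coboundedI1)
  then show ?case using L by (intro bounded_by_loop) auto
next
  case (W n C K M b)
  have "inf_free n (\<lambda>i j. M i j a)"
    by (rule inf_free_mono[OF _ W.prems(2)]) (metis le_mat_star while_mat_eq max.coboundedI1)
  then show ?case using W by (intro bounded_by_while) auto
qed

section \<open>Polynomial bounds\<close>

lemma col_bound_le_growth_sum: "col_bound n L d 0 j s \<le> 2 * growth d (\<Sum>i<n. s i)"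
proof -
  let ?T = "\<Sum>i<n. s i"
  have "max_m n L j s \<le> ?T" by (rule max_m_le) (rule member_le_sum, auto)
  then have "max_m n L j s \<le> growth d ?T" using le_growth[of ?T d] by linarith
  moreover have "sum_wp n L j s \<le> ?T" "sum_p n L 0 j s \<le> ?T"
    unfolding sum_wp_def sum_p_def by (auto intro: sum_mono2)
  then have "growth d (sum_wp n L j s) \<le> growth d ?T" "growth d (sum_p n L 0 j s) \<le> growth d ?T"
    using growth_mono by blast+
  ultimately show ?thesis unfolding col_bound_def by simp
qed

lemma polys_sum_vars: "m \<le> n \<Longrightarrow> (\<lambda>s. \<Sum>i<m. s i) \<in> polys n"
proof (induction m)
  case 0
  show ?case using polys.const[of 0 n] by simp
next
  case (Suc m)
  have "(\<lambda>s. (\<Sum>i<m. s i) + s m) \<in> polys n"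
    by (rule polys.add) (use Suc in \<open>auto intro: polys.var\<close>)
  then show ?case by simp
qed

lemma polys_power: "q \<in> polys n \<Longrightarrow> (\<lambda>s. q s ^ d) \<in> polys n"
proof (induction d)
  case 0
  show ?case using polys.const[of 1 n] by simp
next
  case (Suc d)
  have "(\<lambda>s. q s * q s ^ d) \<in> polys n" by (rule polys.mul) (use Suc in auto)
  then show ?case by simp
qed

lemma polys_growth: "q \<in> polys n \<Longrightarrow> (\<lambda>s. growth d (q s)) \<in> polys n"
  unfolding growth_def by (intro polys.mul polys_power polys.add polys.const)

theorem corollary11:
  fixes n p :: nat and P :: cmd and M :: mat
  assumes "ctyp n P {1..p} M"
    and "\<exists>a::choice. (\<forall>k\<in>{1..p}. a k \<in> {0,1,2}) \<and> (\<forall>i<n. \<forall>j<n. M i j a \<noteq> Infm)"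
  shows "\<exists>q \<in> polys n. \<forall>s s'. exec P s s' \<longrightarrow> (\<forall>j<n. s' j \<le> q s)"
proof -
  obtain a :: choice where a: "\<forall>k\<in>{1..p}. a k \<in> {0,1,2}" and fin: "\<forall>i<n. \<forall>j<n. M i j a \<noteq> Infm"
    using assms(2) by blast
  have "bounded_by n P (\<lambda>i j. M i j a)"
    by (rule ctyp_bounded_by[OF assms(1) a]) (use fin in \<open>simp add: inf_free_def\<close>)
  then obtain d where
    d: "\<forall>s s'. exec P s s' \<longrightarrow> (\<forall>j<n. s' j \<le> col_bound n (\<lambda>i j. M i j a) d 0 j s)"
    unfolding bounded_by_def by blast
  show ?thesis
  proof (rule bexI)
    show "(\<lambda>s. 2 * growth d (\<Sum>i<n. s i)) \<in> polys n"
      by (intro polys.mul polys.const polys_growth polys_sum_vars) simp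
    show "\<forall>s s'. exec P s s' \<longrightarrow> (\<forall>j<n. s' j \<le> 2 * growth d (\<Sum>i<n. s i))"
      using d col_bound_le_growth_sum le_trans by blast
  qed
qed

end
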